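(* Let $\rho=\tfrac12(I_2+\vec r\cdot\vec\sigma)$ be an arbitrary qubit state with Bloch vector $\vec r\in\mathbb R^3$, $|\vec r|\le 1$, and let $\alpha\in\{l_1,r\}$. Then $$C^\alpha_1(\rho)C^\alpha_2(\rho)+C^\alpha_2(\rho)C^\alpha_3(\rho)+C^\alpha_3(\rho)C^\alpha_1(\rho)\;\le\;\sum_{i=1}^3 \big(C^\alpha_i(\rho)\big)^2\;\le\;\Omega_\alpha,$$ where $\Omega_{l_1}=\Omega_r=2$.
   Context: $\sigma_1,\sigma_2,\sigma_3$ are the Pauli matrices, $\vec\sigma=(\sigma_1,\sigma_2,\sigma_3)$. For $k\in\{1,2,3\}$, "basis $k$" is the orthonormal eigenbasis $\{|e^k_0\rangle,|e^k_1\rangle\}$ of $\sigma_k$. The $l_1$-norm of coherence in basis $k$ is $C^{l_1}_k(\rho)=\sum_{m\ne n}|\langle e^k_m|\rho|e^k_n\rangle|$; for a qubit this equals $\sqrt{r_j^2+r_l^2}$ where $\{k,j,l\}=\{1,2,3\}$. The relative entropy of coherence in basis $k$ is $C^r_k(\rho)=S(\Delta_k(\rho))-S(\rho)$, where $S$ is the von Neumann entropy with base-2 logarithm and $\Delta_k(\rho)=\sum_m \langle e^k_m|\rho|e^k_m\rangle |e^k_m\rangle\langle e^k_m|$ is the dephasing in basis $k$; for a qubit this equals $\mathcal H\big(\tfrac{1+r_k}{2}\big)-\mathcal H\big(\tfrac{1+|\vec r|}{2}\big)$ with $\mathcal H(x)=-x\log_2x-(1-x)\log_2(1-x)$. *)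

theory Defs
  imports Complex_Main
begin

text \<open>2x2 complex matrices as functions on indices {0,1}; vectors in C^2 likewise.\<close>
type_synonym cmat2 = "nat \<Rightarrow> nat \<Rightarrow> complex"
type_synonym cvec2 = "nat \<Rightarrow> complex"

definition idm :: cmat2 where
  "idm a b = (if a = b then 1 else 0)"

definition pauli :: "nat \<Rightarrow> cmat2" where
  "pauli k a b =
     (if k = 1 then (if a \<noteq> b then 1 else 0)
      else if k = 2 then (if a = 0 \<and> b = 1 then - \<i> else if a = 1 \<and> b = 0 then \<i> else 0)
      else (if a = 0 \<and> b = 0 then 1 else if a = 1 \<and> b = 1 then -1 else 0))"

definition qubit :: "real \<Rightarrow> real \<Rightarrow> real \<Rightarrow> cmat2" where
  "qubit r1 r2 r3 a b =
     (idm a b + of_real r1 * pauli 1 a b + of_real r2 * pauli 2 a b + of_real r3 * pauli 3 a b) / 2"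

text \<open>Orthonormal eigenbasis {e^k_0, e^k_1} of sigma_k.\<close>
definition ebasis :: "nat \<Rightarrow> nat \<Rightarrow> cvec2" where
  "ebasis k m a =
     (if k = 1 then (if a = 0 then 1 else (if m = 0 then 1 else -1)) / of_real (sqrt 2)
      else if k = 2 then (if a = 0 then 1 else (if m = 0 then \<i> else - \<i>)) / of_real (sqrt 2)
      else (if a = m then 1 else 0))"

definition melem :: "cvec2 \<Rightarrow> cmat2 \<Rightarrow> cvec2 \<Rightarrow> complex" where
  "melem u A v = (\<Sum>a<2. \<Sum>b<2. cnj (u a) * A a b * v b)"

definition C_l1 :: "nat \<Rightarrow> cmat2 \<Rightarrow> real" where
  "C_l1 k \<rho> = (\<Sum>m<2. \<Sum>n<2. if m \<noteq> n then cmod (melem (ebasis k m) \<rho> (ebasis k n)) else 0)"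

definition dephase :: "nat \<Rightarrow> cmat2 \<Rightarrow> cmat2" where
  "dephase k \<rho> a b = (\<Sum>m<2. melem (ebasis k m) \<rho> (ebasis k m) * ebasis k m a * cnj (ebasis k m b))"

text \<open>Eigenvalues of a 2x2 Hermitian matrix (roots of the characteristic polynomial,
  with multiplicity), and the von Neumann entropy with base-2 logarithm.\<close>
definition mtrace :: "cmat2 \<Rightarrow> real" where
  "mtrace A = Re (A 0 0 + A 1 1)"
definition mdet :: "cmat2 \<Rightarrow> real" where
  "mdet A = Re (A 0 0 * A 1 1 - A 0 1 * A 1 0)"
definition eig_plus :: "cmat2 \<Rightarrow> real" where
  "eig_plus A = (mtrace A + sqrt ((mtrace A)^2 - 4 * mdet A)) / 2"
definition eig_minus :: "cmat2 \<Rightarrow> real" where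
  "eig_minus A = (mtrace A - sqrt ((mtrace A)^2 - 4 * mdet A)) / 2"

definition eta :: "real \<Rightarrow> real" where
  "eta x = (if x = 0 then 0 else - x * log 2 x)"

definition vN_entropy :: "cmat2 \<Rightarrow> real" where
  "vN_entropy A = eta (eig_plus A) + eta (eig_minus A)"

definition C_r :: "nat \<Rightarrow> cmat2 \<Rightarrow> real" where
  "C_r k \<rho> = vN_entropy (dephase k \<rho>) - vN_entropy \<rho>"

end

theory Submission
  imports Defs "HOL-Analysis.Harmonic_Numbers"
begin

(*
  For the l1-norm the coherences are the lengths of the projections of the Bloch vector r onto
  the coordinate planes, so their squares sum to 2 |r|^2 <= 2.

  For the relative entropy, the coherence in basis k is H(|r_k|) - H(|r|), where H(y) is the
  binary entropy of (1 + y)/2. The envelopes (1 - y^2)/2 <= H(y) <= sqrt (1 - y^2) give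
  |H(x) - H(R)| <= sqrt (1 - x^2) - (1 - R^2)/2 whenever x <= R; squaring and summing over the
  three axes yields at most 2 - (1 - R^2)(5 - R^2)/4 <= 2. The upper envelope follows from
  (1 + y) ln (1 + y) + (1 - y) ln (1 - y) >= y^2 when y^2 <= 2/5, and from
  - p ln p <= (1 - p) sqrt p when y^2 >= 2/5.
*)

lemma two_ln_le_sub_inverse:
  fixes t :: real
  assumes "1 \<le> t"
  shows "2 * ln t \<le> t - 1 / t"
proof -
  define f where "f x = x - 1 / x - 2 * ln x" for x :: real
  have "f 1 \<le> f t"
  proof (rule deriv_nonneg_imp_mono[where g = f and a = 1 and b = t and g' = "\<lambda>x. (1 - 1 / x)\<^sup>2"])
    fix x :: real
    assume "x \<in> {1..t}"
    then show "(f has_real_derivative (1 - 1 / x)\<^sup>2) (at x)"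
      unfolding f_def by (auto intro!: derivative_eq_intros simp: field_simps power2_eq_square)
  qed (use assms in auto)
  then show ?thesis
    by (simp add: f_def)
qed

lemma two_mult_le_ln_ratio:
  fixes y :: real
  assumes "0 \<le> y" "y < 1"
  shows "2 * y \<le> ln (1 + y) - ln (1 - y)"
proof -
  define f where "f x = ln (1 + x) - ln (1 - x) - 2 * x" for x :: real
  have "f 0 \<le> f y"
  proof (rule deriv_nonneg_imp_mono[where g = f and a = 0 and b = y and g' = "\<lambda>x. 2 * x\<^sup>2 / ((1 + x) * (1 - x))"])
    fix x :: real
    assume "x \<in> {0..y}"
    then have "0 \<le> x" "x < 1"
      using assms by auto
    then show "(f has_real_derivative 2 * x\<^sup>2 / ((1 + x) * (1 - x))) (at x)"
      unfolding f_def by (auto intro!: derivative_eq_intros simp: field_simps power2_eq_square)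
    show "0 \<le> 2 * x\<^sup>2 / ((1 + x) * (1 - x))"
      using \<open>0 \<le> x\<close> \<open>x < 1\<close> by simp
  qed (use assms in auto)
  then show ?thesis
    by (simp add: f_def)
qed

lemma square_le_sum_mult_ln:
  fixes y :: real
  assumes "0 \<le> y" "y < 1"
  shows "y\<^sup>2 \<le> (1 + y) * ln (1 + y) + (1 - y) * ln (1 - y)"
proof -
  define f where "f x = (1 + x) * ln (1 + x) + (1 - x) * ln (1 - x) - x\<^sup>2" for x :: real
  have "f 0 \<le> f y"
  proof (rule deriv_nonneg_imp_mono[where g = f and a = 0 and b = y and g' = "\<lambda>x. ln (1 + x) - ln (1 - x) - 2 * x"])
    fix x :: real
    assume "x \<in> {0..y}"
    then have x: "0 \<le> x" "x < 1"
      using assms by auto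
    then show "(f has_real_derivative ln (1 + x) - ln (1 - x) - 2 * x) (at x)"
      unfolding f_def by (auto intro!: derivative_eq_intros)
    show "0 \<le> ln (1 + x) - ln (1 - x) - 2 * x"
      using two_mult_le_ln_ratio[OF x] by simp
  qed (use assms in auto)
  then show ?thesis
    by (simp add: f_def)
qed

lemma eta_eq_ln:
  assumes "0 < p"
  shows "eta p = - p * ln p / ln 2"
  using assms by (simp add: eta_def log_def)

lemma mult_complement_le_eta:
  fixes p :: real
  assumes "0 \<le> p" "p \<le> 1"
  shows "p * (1 - p) \<le> eta p"
proof (cases "p = 0")
  case True
  then show ?thesis
    by (simp add: eta_def)
next
  case False
  with assms have p: "0 < p"
    by simp
  have "p * (1 - p) \<le> - p * ln p"
    using mult_left_mono[OF ln_le_minus_one[OF p], of p] p by (simp add: algebra_simps)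
  also have "\<dots> \<le> - p * ln p / ln 2"
  proof -
    have "0 \<le> - p * ln p"
      using p assms by (simp add: mult_nonneg_nonpos)
    then show ?thesis
      using mult_left_le[of "ln 2" "- p * ln p"] ln_2_less_1 by (simp add: le_divide_eq divide_le_eq)
  qed
  finally show ?thesis
    using eta_eq_ln[OF p] by simp
qed

lemma eta_le_sqrt:
  fixes p :: real
  assumes "0 \<le> p" "p \<le> 1"
  shows "eta p \<le> (1 - p) * sqrt p / ln 2"
proof (cases "p = 0")
  case True
  then show ?thesis
    by (simp add: eta_def)
next
  case False
  with assms have p: "0 < p"
    by simp
  define s where "s = sqrt p"
  have s: "0 < s" "s \<le> 1" "s * s = p"
    using p assms by (auto simp: s_def)
  have "2 * ln (1 / s) \<le> 1 / s - s"
    using two_ln_le_sub_inverse[of "1 / s"] s by simp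
  moreover have "2 * ln (1 / s) = - ln p"
    using p by (simp add: s_def ln_div ln_sqrt)
  ultimately have "- p * ln p \<le> p * (1 / s - s)"
    using mult_left_mono[of "- ln p" "1 / s - s" p] p by simp
  also have "\<dots> = (1 - p) * s"
    using s by (simp add: field_simps flip: s(3))
  finally have "- p * ln p / ln 2 \<le> (1 - p) * s / ln 2"
    by (rule divide_right_mono) simp
  then show ?thesis
    using eta_eq_ln[OF p] by (simp add: s_def)
qed

definition bloch_entropy :: "real \<Rightarrow> real" where
  "bloch_entropy y = eta ((1 + y) / 2) + eta ((1 - y) / 2)"

lemma bloch_entropy_ge:
  assumes "\<bar>y\<bar> \<le> 1"
  shows "(1 - y\<^sup>2) / 2 \<le> bloch_entropy y"
proof -
  have "(1 + y) / 2 * (1 - (1 + y) / 2) \<le> eta ((1 + y) / 2)"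
    "(1 - y) / 2 * (1 - (1 - y) / 2) \<le> eta ((1 - y) / 2)"
    using assms by (intro mult_complement_le_eta; simp add: abs_le_iff)+
  then show ?thesis
    unfolding bloch_entropy_def by (simp add: field_simps power2_eq_square)
qed

lemma bloch_entropy_le_sqrt_of_small:
  assumes "0 \<le> y" "y\<^sup>2 \<le> 2 / 5"
  shows "bloch_entropy y \<le> sqrt (1 - y\<^sup>2)"
proof -
  define L where "L = ln (2::real)"
  have L: "2 / 3 \<le> L" "L \<le> 25 / 36"
    using ln2_ge_two_thirds ln2_le_25_over_36 by (simp_all add: L_def)
  have "y < 1"
    using assms abs_square_less_1[of y] by simp
  have "bloch_entropy y = 1 - ((1 + y) * ln (1 + y) + (1 - y) * ln (1 - y)) / (2 * L)"
    using assms \<open>y < 1\<close> L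
    by (simp add: bloch_entropy_def eta_eq_ln ln_div L_def field_simps)
  also have "\<dots> \<le> 1 - y\<^sup>2 / (2 * L)"
    using square_le_sum_mult_ln[OF assms(1) \<open>y < 1\<close>] L by (simp add: divide_right_mono)
  also have "\<dots> \<le> sqrt (1 - y\<^sup>2)"
  proof (rule real_le_rsqrt)
    have "4 * L * (1 - L) = 4 * ((L - 2 / 3) * (25 / 36 - L)) - 13 / 9 * L + 50 / 27"
      by (simp add: field_simps)
    moreover have "0 \<le> (L - 2 / 3) * (25 / 36 - L)"
      using L by simp
    ultimately have "y\<^sup>2 \<le> 4 * L * (1 - L)"
      using assms(2) L by linarith
    then have "y\<^sup>2 * y\<^sup>2 \<le> y\<^sup>2 * (4 * L * (1 - L))"
      by (rule mult_left_mono) simp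
    then show "(1 - y\<^sup>2 / (2 * L))\<^sup>2 \<le> 1 - y\<^sup>2"
      using L by (simp add: power2_eq_square field_simps)
  qed
  finally show ?thesis .
qed

lemma bloch_entropy_le_sqrt_of_large:
  assumes "0 \<le> y" "y \<le> 1" "2 / 5 \<le> y\<^sup>2"
  shows "bloch_entropy y \<le> sqrt (1 - y\<^sup>2)"
proof -
  define a where "a = sqrt ((1 + y) / 2)"
  define b where "b = sqrt ((1 - y) / 2)"
  define s where "s = sqrt (1 - y\<^sup>2)"
  have a2: "a\<^sup>2 = (1 + y) / 2" and b2: "b\<^sup>2 = (1 - y) / 2"
    using assms(1,2) by (simp_all add: a_def b_def)
  have ab: "0 \<le> a" "0 \<le> b"
    using assms(1,2) by (simp_all add: a_def b_def)
  have "a * b = sqrt ((1 - y\<^sup>2) / 4)"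
    unfolding a_def b_def real_sqrt_mult[symmetric] by (simp add: power2_eq_square field_simps)
  then have ab_eq: "a * b = s / 2"
    by (simp add: s_def real_sqrt_divide)
  have s2: "s\<^sup>2 = 1 - y\<^sup>2"
    using assms(1,2) by (simp add: s_def abs_square_le_1)
  have "bloch_entropy y \<le> (1 - (1 + y) / 2) * a / ln 2 + (1 - (1 - y) / 2) * b / ln 2"
    unfolding bloch_entropy_def a_def b_def
    using eta_le_sqrt[of "(1 + y) / 2"] eta_le_sqrt[of "(1 - y) / 2"] assms(1,2) by simp
  also have "\<dots> = (b\<^sup>2 * a + a\<^sup>2 * b) / ln 2"
    by (simp add: a2 b2 field_simps)
  also have "\<dots> = s / 2 * (a + b) / ln 2"
    by (simp add: ab_eq[symmetric] power2_eq_square algebra_simps)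
  also have "\<dots> \<le> s"
  proof -
    have "s\<^sup>2 \<le> (7 / 9)\<^sup>2"
      using s2 assms(3) by (simp add: power_divide)
    then have "s \<le> 7 / 9"
      by (rule power2_le_imp_le) simp
    then have "(a + b)\<^sup>2 \<le> (4 / 3)\<^sup>2"
      using a2 b2 ab_eq by (simp add: power2_sum power_divide)
    then have "a + b \<le> 4 / 3"
      by (rule power2_le_imp_le) simp
    then have "a + b \<le> 2 * ln 2"
      using ln2_ge_two_thirds by simp
    moreover have "0 \<le> s"
      using assms(1,2) by (simp add: s_def abs_square_le_1)
    ultimately show ?thesis
      by (simp add: divide_le_eq mult_left_mono)
  qed
  finally show ?thesis
    by (simp add: s_def)
qed

lemma bloch_entropy_le_sqrt:
  assumes "0 \<le> y" "y \<le> 1"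
  shows "bloch_entropy y \<le> sqrt (1 - y\<^sup>2)"
  using bloch_entropy_le_sqrt_of_small bloch_entropy_le_sqrt_of_large assms
  by (cases "y\<^sup>2 \<le> 2 / 5") auto

lemma bloch_entropy_diff_sq_le:
  assumes "0 \<le> x" "x \<le> R" "R \<le> 1"
  shows "(bloch_entropy x - bloch_entropy R)\<^sup>2 \<le> (1 - x\<^sup>2) * R\<^sup>2 + ((1 - R\<^sup>2) / 2)\<^sup>2"
proof -
  define u where "u = sqrt (1 - x\<^sup>2)"
  define l where "l = (1 - R\<^sup>2) / 2"
  have "x\<^sup>2 \<le> R\<^sup>2" "R\<^sup>2 \<le> 1"
    using assms by (auto intro: power_mono simp: abs_square_le_1)
  then have u: "0 \<le> u" "u \<le> 1" "u\<^sup>2 = 1 - x\<^sup>2" and l: "0 \<le> l" "l \<le> (1 - x\<^sup>2) / 2"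
    by (auto simp: u_def l_def)
  have "bloch_entropy R \<le> sqrt (1 - R\<^sup>2)"
    by (rule bloch_entropy_le_sqrt) (use assms in auto)
  moreover have "sqrt (1 - R\<^sup>2) \<le> u"
    using \<open>x\<^sup>2 \<le> R\<^sup>2\<close> by (simp add: u_def)
  moreover have "bloch_entropy x \<le> u"
    unfolding u_def by (rule bloch_entropy_le_sqrt) (use assms in auto)
  moreover have "(1 - x\<^sup>2) / 2 \<le> bloch_entropy x" "l \<le> bloch_entropy R"
    unfolding l_def by (rule bloch_entropy_ge; use assms in simp)+
  ultimately have "\<bar>bloch_entropy x - bloch_entropy R\<bar> \<le> u - l"
    using l(2) by (simp add: abs_le_iff)
  then have "(bloch_entropy x - bloch_entropy R)\<^sup>2 \<le> (u - l)\<^sup>2"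
    by (metis abs_ge_zero order_trans power2_abs power_mono)
  also have "\<dots> \<le> u\<^sup>2 - 2 * l * u\<^sup>2 + l\<^sup>2"
    using mult_left_mono[of "u\<^sup>2" u "2 * l"] u l
    by (simp add: power2_eq_square algebra_simps mult_left_le_one_le)
  also have "\<dots> = (1 - x\<^sup>2) * R\<^sup>2 + ((1 - R\<^sup>2) / 2)\<^sup>2"
    by (simp add: u(3) l_def field_simps)
  finally show ?thesis .
qed

lemma bloch_entropy_diff_sum_sq_le_two:
  fixes x1 x2 x3 :: real
  assumes "0 \<le> x1" "0 \<le> x2" "0 \<le> x3" and norm_le: "x1\<^sup>2 + x2\<^sup>2 + x3\<^sup>2 \<le> 1"
  defines "R \<equiv> sqrt (x1\<^sup>2 + x2\<^sup>2 + x3\<^sup>2)"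
  shows "(bloch_entropy x1 - bloch_entropy R)\<^sup>2 + (bloch_entropy x2 - bloch_entropy R)\<^sup>2
           + (bloch_entropy x3 - bloch_entropy R)\<^sup>2 \<le> 2"
proof -
  have R2: "R\<^sup>2 = x1\<^sup>2 + x2\<^sup>2 + x3\<^sup>2"
    by (simp add: R_def)
  have "R \<le> 1"
    using norm_le by (simp add: R_def)
  moreover have "x1 \<le> R" "x2 \<le> R" "x3 \<le> R"
    unfolding R_def using assms by (auto intro!: real_le_rsqrt)
  ultimately have "(bloch_entropy x1 - bloch_entropy R)\<^sup>2 + (bloch_entropy x2 - bloch_entropy R)\<^sup>2
      + (bloch_entropy x3 - bloch_entropy R)\<^sup>2 \<le> (3 - R\<^sup>2) * R\<^sup>2 + 3 * ((1 - R\<^sup>2) / 2)\<^sup>2"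
    using bloch_entropy_diff_sq_le[of x1 R] bloch_entropy_diff_sq_le[of x2 R]
      bloch_entropy_diff_sq_le[of x3 R] assms R2
    by (simp add: algebra_simps)
  also have "\<dots> = 2 - (1 - R\<^sup>2) * (5 - R\<^sup>2) / 4"
    by (simp add: field_simps power2_eq_square)
  also have "\<dots> \<le> 2"
    using norm_le R2 by simp
  finally show ?thesis .
qed

lemma qubit_entries:
  "qubit r1 r2 r3 0 0 = (1 + of_real r3) / 2"
  "qubit r1 r2 r3 (Suc 0) (Suc 0) = (1 - of_real r3) / 2"
  "qubit r1 r2 r3 0 (Suc 0) = Complex r1 (- r2) / 2"
  "qubit r1 r2 r3 (Suc 0) 0 = Complex r1 r2 / 2"
  by (simp_all add: qubit_def pauli_def idm_def complex_eq_iff)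

lemma melem_expand:
  "melem u A v = cnj (u 0) * A 0 0 * v 0 + cnj (u 0) * A 0 (Suc 0) * v (Suc 0)
     + cnj (u (Suc 0)) * A (Suc 0) 0 * v 0 + cnj (u (Suc 0)) * A (Suc 0) (Suc 0) * v (Suc 0)"
  by (simp add: melem_def numeral_2_eq_2)

lemma dephase_expand:
  "dephase k A a b = melem (ebasis k 0) A (ebasis k 0) * ebasis k 0 a * cnj (ebasis k 0 b)
     + melem (ebasis k 1) A (ebasis k 1) * ebasis k 1 a * cnj (ebasis k 1 b)"
  by (simp add: dephase_def numeral_2_eq_2)

lemma of_real_sqrt2_sq: "(of_real (sqrt 2) :: complex) * of_real (sqrt 2) = 2"
  by (simp flip: of_real_mult)

lemma qubit_melem:
  "melem (ebasis 1 0) (qubit r1 r2 r3) (ebasis 1 0) = (1 + of_real r1) / 2"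
  "melem (ebasis 1 1) (qubit r1 r2 r3) (ebasis 1 1) = (1 - of_real r1) / 2"
  "melem (ebasis 2 0) (qubit r1 r2 r3) (ebasis 2 0) = (1 + of_real r2) / 2"
  "melem (ebasis 2 1) (qubit r1 r2 r3) (ebasis 2 1) = (1 - of_real r2) / 2"
  "melem (ebasis 3 0) (qubit r1 r2 r3) (ebasis 3 0) = (1 + of_real r3) / 2"
  "melem (ebasis 3 1) (qubit r1 r2 r3) (ebasis 3 1) = (1 - of_real r3) / 2"
  "melem (ebasis 1 0) (qubit r1 r2 r3) (ebasis 1 1) = Complex (r3 / 2) (r2 / 2)"
  "melem (ebasis 1 1) (qubit r1 r2 r3) (ebasis 1 0) = cnj (Complex (r3 / 2) (r2 / 2))"
  "melem (ebasis 2 0) (qubit r1 r2 r3) (ebasis 2 1) = cnj (Complex (r3 / 2) (r1 / 2))"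
  "melem (ebasis 2 1) (qubit r1 r2 r3) (ebasis 2 0) = Complex (r3 / 2) (r1 / 2)"
  "melem (ebasis 3 0) (qubit r1 r2 r3) (ebasis 3 1) = cnj (Complex (r1 / 2) (r2 / 2))"
  "melem (ebasis 3 1) (qubit r1 r2 r3) (ebasis 3 0) = Complex (r1 / 2) (r2 / 2)"
  by (simp_all add: melem_expand qubit_entries ebasis_def,
      simp_all add: field_simps of_real_sqrt2_sq complex_eq_iff)

lemma dephase_qubit_trace_det:
  "mtrace (dephase 1 (qubit r1 r2 r3)) = 1" "mdet (dephase 1 (qubit r1 r2 r3)) = (1 - r1\<^sup>2) / 4"
  "mtrace (dephase 2 (qubit r1 r2 r3)) = 1" "mdet (dephase 2 (qubit r1 r2 r3)) = (1 - r2\<^sup>2) / 4"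
  "mtrace (dephase 3 (qubit r1 r2 r3)) = 1" "mdet (dephase 3 (qubit r1 r2 r3)) = (1 - r3\<^sup>2) / 4"
  unfolding mtrace_def mdet_def dephase_expand qubit_melem
  by (simp_all add: ebasis_def, simp_all add: field_simps of_real_sqrt2_sq power2_eq_square)

lemma qubit_trace_det:
  "mtrace (qubit r1 r2 r3) = 1" "mdet (qubit r1 r2 r3) = (1 - (r1\<^sup>2 + r2\<^sup>2 + r3\<^sup>2)) / 4"
  by (simp_all add: mtrace_def mdet_def qubit_entries field_simps power2_eq_square)

lemma C_l1_expand:
  "C_l1 k A = cmod (melem (ebasis k 0) A (ebasis k 1)) + cmod (melem (ebasis k 1) A (ebasis k 0))"
  by (simp add: C_l1_def numeral_2_eq_2)

lemma cmod_Complex_half: "cmod (Complex (a / 2) (b / 2)) = sqrt (a\<^sup>2 + b\<^sup>2) / 2"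
  by (simp add: cmod_def power_divide real_sqrt_divide flip: add_divide_distrib)

lemma C_l1_qubit:
  "C_l1 1 (qubit r1 r2 r3) = sqrt (r2\<^sup>2 + r3\<^sup>2)"
  "C_l1 2 (qubit r1 r2 r3) = sqrt (r1\<^sup>2 + r3\<^sup>2)"
  "C_l1 3 (qubit r1 r2 r3) = sqrt (r1\<^sup>2 + r2\<^sup>2)"
  unfolding C_l1_expand qubit_melem complex_mod_cnj cmod_Complex_half by (simp_all add: add.commute)

lemma vN_entropy_eq_bloch_entropy:
  assumes "mtrace A = 1" "mdet A = (1 - y\<^sup>2) / 4"
  shows "vN_entropy A = bloch_entropy \<bar>y\<bar>"
proof -
  have "(mtrace A)\<^sup>2 - 4 * mdet A = y\<^sup>2"
    using assms by simp
  then have "sqrt ((mtrace A)\<^sup>2 - 4 * mdet A) = \<bar>y\<bar>"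
    by simp
  then show ?thesis
    using assms(1) unfolding vN_entropy_def eig_plus_def eig_minus_def bloch_entropy_def by simp
qed

lemma C_r_qubit:
  fixes r1 r2 r3 :: real
  defines "R \<equiv> sqrt (r1\<^sup>2 + r2\<^sup>2 + r3\<^sup>2)"
  shows "C_r 1 (qubit r1 r2 r3) = bloch_entropy \<bar>r1\<bar> - bloch_entropy R"
    "C_r 2 (qubit r1 r2 r3) = bloch_entropy \<bar>r2\<bar> - bloch_entropy R"
    "C_r 3 (qubit r1 r2 r3) = bloch_entropy \<bar>r3\<bar> - bloch_entropy R"
proof -
  have det: "mdet (qubit r1 r2 r3) = (1 - R\<^sup>2) / 4"
    by (simp add: R_def qubit_trace_det)
  have "vN_entropy (qubit r1 r2 r3) = bloch_entropy R"
    using vN_entropy_eq_bloch_entropy[OF qubit_trace_det(1) det] by (simp add: R_def)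
  then show "C_r 1 (qubit r1 r2 r3) = bloch_entropy \<bar>r1\<bar> - bloch_entropy R"
    "C_r 2 (qubit r1 r2 r3) = bloch_entropy \<bar>r2\<bar> - bloch_entropy R"
    "C_r 3 (qubit r1 r2 r3) = bloch_entropy \<bar>r3\<bar> - bloch_entropy R"
    unfolding C_r_def
      vN_entropy_eq_bloch_entropy[OF dephase_qubit_trace_det(1,2)]
      vN_entropy_eq_bloch_entropy[OF dephase_qubit_trace_det(3,4)]
      vN_entropy_eq_bloch_entropy[OF dephase_qubit_trace_det(5,6)]
    by simp_all
qed

lemma pairwise_products_le_sum_squares:
  fixes a b c :: "'a :: linordered_idom"
  shows "a * b + b * c + c * a \<le> a\<^sup>2 + b\<^sup>2 + c\<^sup>2"
proof -
  have "0 \<le> (a - b)\<^sup>2 + (b - c)\<^sup>2 + (c - a)\<^sup>2"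
    by simp
  then show ?thesis
    by (simp add: power2_eq_square algebra_simps)
qed

theorem mainTheorem1:
  fixes r1 r2 r3 :: real
  assumes "r1\<^sup>2 + r2\<^sup>2 + r3\<^sup>2 \<le> 1"
  shows "\<forall>C \<in> {C_l1, C_r}.
           (let \<rho> = qubit r1 r2 r3 in
              C 1 \<rho> * C 2 \<rho> + C 2 \<rho> * C 3 \<rho> + C 3 \<rho> * C 1 \<rho>
                \<le> (\<Sum>i\<in>{1..3::nat}. (C i \<rho>)\<^sup>2)
            \<and> (\<Sum>i\<in>{1..3::nat}. (C i \<rho>)\<^sup>2) \<le> 2)"
proof -
  let ?\<rho> = "qubit r1 r2 r3"
  have sum_three: "(\<Sum>i\<in>{1..3::nat}. f i) = f 1 + f 2 + f 3" for f :: "nat \<Rightarrow> real"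
    by (simp add: eval_nat_numeral atLeastAtMostSuc_conv)
  have "(C_l1 1 ?\<rho>)\<^sup>2 + (C_l1 2 ?\<rho>)\<^sup>2 + (C_l1 3 ?\<rho>)\<^sup>2 \<le> 2"
    using assms unfolding C_l1_qubit by simp
  moreover have "(C_r 1 ?\<rho>)\<^sup>2 + (C_r 2 ?\<rho>)\<^sup>2 + (C_r 3 ?\<rho>)\<^sup>2 \<le> 2"
    using bloch_entropy_diff_sum_sq_le_two[of "\<bar>r1\<bar>" "\<bar>r2\<bar>" "\<bar>r3\<bar>"] assms
    unfolding C_r_qubit by simp
  ultimately show ?thesis
    unfolding Let_def sum_three using pairwise_products_le_sum_squares by auto
qed

end
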